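(* Let $m\geq 1$ be an integer. Then \[ \sum_{k=1}^{\infty}\frac{(q^m/z;q)_k}{(zq^{-m};q)_{m}(q;q)_k(1-q^k)^{m}}z^k =-\sum_{1\leq k_m\leq k_{m-1}\leq\cdots\leq k_1}\ \prod_{i=1}^{m}\frac{q^{k_i}}{(1-zq^{k_i-i})(1-q^{k_i})}. \]
   Context: For $N\geq 0$, $(x;q)_N=(1-x)(1-xq)\cdots(1-xq^{N-1})$ (with $(x;q)_0=1$). Here $q,z$ are complex parameters with $|q|<1$ for which the series converge and no denominator vanishes. *)

theory Defs
  imports "HOL-Analysis.Analysis"
begin

definition qpoch :: "complex \<Rightarrow> complex \<Rightarrow> nat \<Rightarrow> complex" where
  "qpoch x q N = (\<Prod>j<N. (1 - x * q ^ j))"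

text \<open>Index set of the multiple sum: tuples (k_1,...,k_m) with 1 <= k_m <= ... <= k_1,
  encoded as functions nat => nat that vanish outside {1..m}.\<close>
definition chain_idx :: "nat \<Rightarrow> (nat \<Rightarrow> nat) set" where
  "chain_idx m = {k. (\<forall>i. i \<notin> {1..m} \<longrightarrow> k i = 0) \<and> 1 \<le> k m \<and>
                      (\<forall>i\<in>{1..<m}. k (Suc i) \<le> k i)}"

end

theory Submission
  imports Defs
begin

text \<open>Restrict the multiple sum to chains with \<open>k\<^sub>1 \<le> n\<close>.  Peeling off \<open>k\<^sub>1\<close> gives a recursion
  in \<open>m\<close> (with \<open>z\<close> replaced by \<open>z / q\<close>), and a finite closed form built from $q$-binomial
  coefficients satisfies the same recursion, thanks to a one-step identity in \<open>n\<close>; for \<open>m = 0\<close> the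
  closed form reduces to a $q$-Chu--Vandermonde sum.  As \<open>n \<rightarrow> \<infinity>\<close> the $q$-binomial coefficients
  tend to \<open>1 / (q;q)\<^sub>k\<close>, and Tannery's theorem turns the closed form into the series.  The
  factors of the multiple sum decay geometrically, so it converges absolutely, and summability of
  the series forces \<open>norm z < 1\<close>, which is what Tannery's theorem needs.\<close>

section \<open>Chains\<close>

definition bounded_chains :: "nat \<Rightarrow> nat \<Rightarrow> (nat \<Rightarrow> nat) set" where
  "bounded_chains m n = {k. (\<forall>i. i \<notin> {1..m} \<longrightarrow> k i = 0) \<and> (\<forall>i\<in>{1..m}. 1 \<le> k i \<and> k i \<le> n) \<and>
                            (\<forall>i\<in>{1..<m}. k (Suc i) \<le> k i)}"

definition chain_sum :: "nat \<Rightarrow> (nat \<Rightarrow> nat \<Rightarrow> 'a::comm_semiring_1) \<Rightarrow> nat \<Rightarrow> 'a" where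
  "chain_sum m F n = (\<Sum>k\<in>bounded_chains m n. \<Prod>i\<in>{1..m}. F i (k i))"

definition chain_cons :: "nat \<Rightarrow> (nat \<Rightarrow> nat) \<Rightarrow> nat \<Rightarrow> nat" where
  "chain_cons l k i = (if i = 1 then l else k (i - 1))"

definition chain_tail :: "(nat \<Rightarrow> nat) \<Rightarrow> nat \<Rightarrow> nat" where
  "chain_tail k i = (if i = 0 then 0 else k (Suc i))"

lemma bounded_chains_0: "bounded_chains 0 n = {\<lambda>_. 0}"
  unfolding bounded_chains_def by auto

lemma antimono_chain:
  fixes k :: "nat \<Rightarrow> nat"
  assumes "\<forall>i\<in>{1..<m}. k (Suc i) \<le> k i" "1 \<le> a" "a \<le> b" "b \<le> m"
  shows "k b \<le> k a"
  using assms(3,4)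
proof (induction b rule: dec_induct)
  case (step b)
  then have "b \<in> {1..<m}" using assms(2) by auto
  then show ?case using assms(1) step by force
qed simp

lemma chain_cons_mem:
  assumes l: "l \<in> {1..n}" and k: "k \<in> bounded_chains m l"
  shows "chain_cons l k \<in> bounded_chains (Suc m) n"
proof -
  have k0: "\<And>i. i \<notin> {1..m} \<Longrightarrow> k i = 0"
    and k1: "\<And>i. i \<in> {1..m} \<Longrightarrow> 1 \<le> k i \<and> k i \<le> l"
    and k2: "\<And>i. i \<in> {1..<m} \<Longrightarrow> k (Suc i) \<le> k i"
    using k unfolding bounded_chains_def by auto
  have "chain_cons l k i = 0" if "i \<notin> {1..Suc m}" for i
    using that by (auto simp: chain_cons_def intro!: k0)
  moreover have "1 \<le> chain_cons l k i \<and> chain_cons l k i \<le> n" if "i \<in> {1..Suc m}" for i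
  proof (cases "i = 1")
    case False
    then have "i - 1 \<in> {1..m}" using that by auto
    then show ?thesis using k1 l False by (fastforce simp: chain_cons_def)
  qed (use l in \<open>simp add: chain_cons_def\<close>)
  moreover have "chain_cons l k (Suc i) \<le> chain_cons l k i" if "i \<in> {1..<Suc m}" for i
  proof (cases "i = 1")
    case False
    then have "i - 1 \<in> {1..<m}" "Suc (i - 1) = i" using that by auto
    then show ?thesis using k2[of "i - 1"] False by (simp add: chain_cons_def)
  qed (use that k1[of 1] in \<open>auto simp: chain_cons_def\<close>)
  ultimately show ?thesis unfolding bounded_chains_def by blast
qed

lemma chain_tail_mem:
  assumes "k \<in> bounded_chains (Suc m) n"
  shows "k 1 \<in> {1..n}" and "chain_tail k \<in> bounded_chains m (k 1)"
proof -
  have k0: "\<And>i. i \<notin> {1..Suc m} \<Longrightarrow> k i = 0"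
    and k1: "\<And>i. i \<in> {1..Suc m} \<Longrightarrow> 1 \<le> k i \<and> k i \<le> n"
    and k2: "\<forall>i\<in>{1..<Suc m}. k (Suc i) \<le> k i"
    using assms unfolding bounded_chains_def by auto
  show "k 1 \<in> {1..n}" using k1[of 1] by auto
  have "chain_tail k i = 0" if "i \<notin> {1..m}" for i
    using that k0[of "Suc i"] by (auto simp: chain_tail_def)
  moreover have "1 \<le> chain_tail k i \<and> chain_tail k i \<le> k 1" if "i \<in> {1..m}" for i
    using that k1[of "Suc i"] antimono_chain[OF k2, of 1 "Suc i"] by (auto simp: chain_tail_def)
  moreover have "chain_tail k (Suc i) \<le> chain_tail k i" if "i \<in> {1..<m}" for i
    using that k2 by (auto simp: chain_tail_def)
  ultimately show "chain_tail k \<in> bounded_chains m (k 1)" unfolding bounded_chains_def by blast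
qed

lemma bij_betw_chain_cons:
  "bij_betw (\<lambda>(l, k). chain_cons l k) (SIGMA l:{1..n}. bounded_chains m l) (bounded_chains (Suc m) n)"
proof (rule bij_betw_byWitness[where f'="\<lambda>k. (k 1, chain_tail k)"])
  have "k 0 = 0" if "k \<in> bounded_chains m' n'" for k m' n'
    using that unfolding bounded_chains_def by auto
  then show "\<forall>a\<in>(SIGMA l:{1..n}. bounded_chains m l). (\<lambda>k. (k 1, chain_tail k)) ((\<lambda>(l, k). chain_cons l k) a) = a"
    and "\<forall>k\<in>bounded_chains (Suc m) n. (\<lambda>(l, k). chain_cons l k) (k 1, chain_tail k) = k"
    by (auto simp: chain_cons_def chain_tail_def fun_eq_iff le_Suc_eq)
qed (auto intro: chain_cons_mem dest: chain_tail_mem)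

lemma finite_bounded_chains: "finite (bounded_chains m n)"
proof (induction m arbitrary: n)
  case 0
  show ?case by (simp add: bounded_chains_0)
next
  case (Suc m)
  have "finite ((\<lambda>(l, k). chain_cons l k) ` (SIGMA l:{1..n}. bounded_chains m l))"
    using Suc by (intro finite_imageI finite_SigmaI) auto
  then show ?case using bij_betw_chain_cons[of n m] by (simp add: bij_betw_def)
qed

lemma chain_sum_0: "chain_sum 0 F n = 1"
  unfolding chain_sum_def bounded_chains_0 by simp

lemma chain_sum_Suc: "chain_sum (Suc m) F n = (\<Sum>l=1..n. F 1 l * chain_sum m (\<lambda>i. F (Suc i)) l)"
proof -
  have prod_cons: "(\<Prod>i=1..Suc m. F i (chain_cons l k i)) = F 1 l * (\<Prod>i=1..m. F (Suc i) (k i))" for l k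
  proof -
    have "(\<Prod>i=1..Suc m. F i (chain_cons l k i)) = F 1 l * (\<Prod>i=Suc 1..Suc m. F i (chain_cons l k i))"
      by (simp add: prod.atLeast_Suc_atMost chain_cons_def mult.assoc)
    also have "(\<Prod>i=Suc 1..Suc m. F i (chain_cons l k i)) = (\<Prod>i=1..m. F (Suc i) (k i))"
      by (subst prod.shift_bounds_cl_Suc_ivl) (simp add: chain_cons_def)
    finally show ?thesis .
  qed
  have "chain_sum (Suc m) F n =
      (\<Sum>x\<in>(SIGMA l:{1..n}. bounded_chains m l). \<Prod>i=1..Suc m. F i ((\<lambda>(l, k). chain_cons l k) x i))"
    unfolding chain_sum_def by (rule sum.reindex_bij_betw[OF bij_betw_chain_cons, symmetric])
  also have "\<dots> = (\<Sum>l=1..n. \<Sum>k\<in>bounded_chains m l. \<Prod>i=1..Suc m. F i (chain_cons l k i))"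
    by (subst sum.Sigma) (auto simp: finite_bounded_chains split_def)
  also have "\<dots> = (\<Sum>l=1..n. F 1 l * chain_sum m (\<lambda>i. F (Suc i)) l)"
    unfolding prod_cons chain_sum_def by (simp add: sum_distrib_left)
  finally show ?thesis .
qed

lemma chain_sum_nonneg_le_power:
  fixes G :: "nat \<Rightarrow> nat \<Rightarrow> real"
  assumes "\<And>i l. i \<in> {1..m} \<Longrightarrow> 1 \<le> l \<Longrightarrow> 0 \<le> G i l \<and> G i l \<le> h l"
    and "summable h" and "\<And>l. 0 \<le> h l"
  shows "0 \<le> chain_sum m G n \<and> chain_sum m G n \<le> suminf h ^ m"
  using assms(1)
proof (induction m arbitrary: G n)
  case 0
  then show ?case by (simp add: chain_sum_0)
next
  case (Suc m)
  have IH: "0 \<le> chain_sum m (\<lambda>i. G (Suc i)) l \<and> chain_sum m (\<lambda>i. G (Suc i)) l \<le> suminf h ^ m" for l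
    by (rule Suc.IH) (use Suc.prems in auto)
  have G1: "0 \<le> G 1 l \<and> G 1 l \<le> h l" if "1 \<le> l" for l
    using Suc.prems that by auto
  have "0 \<le> (\<Sum>l=1..n. G 1 l * chain_sum m (\<lambda>i. G (Suc i)) l)"
    using IH G1 by (intro sum_nonneg) auto
  moreover have "(\<Sum>l=1..n. G 1 l * chain_sum m (\<lambda>i. G (Suc i)) l) \<le> (\<Sum>l=1..n. h l) * suminf h ^ m"
    unfolding sum_distrib_right using IH G1 assms(3) by (intro sum_mono mult_mono) auto
  moreover have "(\<Sum>l=1..n. h l) \<le> suminf h"
    by (intro sum_le_suminf) (use assms(2,3) in auto)
  then have "(\<Sum>l=1..n. h l) * suminf h ^ m \<le> suminf h * suminf h ^ m"
    using assms(2,3) by (intro mult_right_mono zero_le_power suminf_nonneg) auto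
  ultimately show ?case unfolding chain_sum_Suc by simp
qed

lemma bounded_chains_subset_chain_idx: "1 \<le> m \<Longrightarrow> bounded_chains m n \<subseteq> chain_idx m"
  unfolding bounded_chains_def chain_idx_def by auto

lemma chain_idx_in_bounded_chains:
  assumes "k \<in> chain_idx m"
  shows "k \<in> bounded_chains m (k 1)"
proof -
  have k: "\<forall>i. i \<notin> {1..m} \<longrightarrow> k i = 0" "1 \<le> k m" "\<forall>i\<in>{1..<m}. k (Suc i) \<le> k i"
    using assms unfolding chain_idx_def by auto
  have "1 \<le> k i \<and> k i \<le> k 1" if "i \<in> {1..m}" for i
    using antimono_chain[OF k(3), of i m] antimono_chain[OF k(3), of 1 i] that k(2) by auto
  then show ?thesis using k unfolding bounded_chains_def by auto
qed

lemma bounded_chains_mono: "n \<le> n' \<Longrightarrow> bounded_chains m n \<subseteq> bounded_chains m n'"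
  unfolding bounded_chains_def by auto

lemma finite_chains_subset_bounded_chains:
  assumes "finite X" "X \<subseteq> chain_idx m"
  shows "X \<subseteq> bounded_chains m (Max ((\<lambda>k. k 1) ` X))"
proof
  fix k assume "k \<in> X"
  then have "k 1 \<le> Max ((\<lambda>k. k 1) ` X)" "k \<in> chain_idx m"
    using assms by (auto intro: Max_ge)
  then show "k \<in> bounded_chains m (Max ((\<lambda>k. k 1) ` X))"
    using chain_idx_in_bounded_chains bounded_chains_mono by blast
qed

lemma filterlim_bounded_chains:
  assumes "1 \<le> m"
  shows "filterlim (bounded_chains m) (finite_subsets_at_top (chain_idx m)) sequentially"
  unfolding filterlim_finite_subsets_at_top
proof (intro allI impI)
  fix X assume X: "finite X \<and> X \<subseteq> chain_idx m"
  then have "X \<subseteq> bounded_chains m n" if "Max ((\<lambda>k. k 1) ` X) \<le> n" for n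
    using finite_chains_subset_bounded_chains bounded_chains_mono[OF that] by blast
  then show "\<forall>\<^sub>F n in sequentially. finite (bounded_chains m n) \<and> X \<subseteq> bounded_chains m n \<and>
               bounded_chains m n \<subseteq> chain_idx m"
    using finite_bounded_chains bounded_chains_subset_chain_idx[OF assms]
    by (auto simp: eventually_at_top_linorder)
qed

section \<open>Estimates for $q$-Pochhammer symbols\<close>

lemma sum_power_le_inverse_one_minus:
  fixes r :: real
  assumes "0 \<le> r" "r < 1"
  shows "(\<Sum>j<K. r ^ j) \<le> 1 / (1 - r)"
proof -
  have "(\<Sum>j<K. r ^ j) = (1 - r ^ K) / (1 - r)" using assms by (simp add: sum_gp_strict)
  also have "\<dots> \<le> 1 / (1 - r)" using assms by (intro divide_right_mono) auto
  finally show ?thesis .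
qed

lemma prod_one_plus_le_exp:
  fixes y :: "nat \<Rightarrow> real"
  assumes "\<And>j. j < K \<Longrightarrow> 0 \<le> y j \<and> y j \<le> r ^ j" "0 \<le> r" "r < 1"
  shows "(\<Prod>j<K. 1 + y j) \<le> exp (1 / (1 - r))"
proof -
  have "(\<Prod>j<K. 1 + y j) \<le> (\<Prod>j<K. exp (y j))"
    by (rule prod_mono) (use assms(1) in \<open>auto intro: exp_ge_add_one_self\<close>)
  also have "\<dots> = exp (\<Sum>j<K. y j)" by (simp add: exp_sum)
  also have "(\<Sum>j<K. y j) \<le> (\<Sum>j<K. r ^ j)" by (rule sum_mono) (use assms(1) in auto)
  then have "exp (\<Sum>j<K. y j) \<le> exp (1 / (1 - r))"
    using sum_power_le_inverse_one_minus[OF assms(2,3), of K] by simp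
  finally show ?thesis .
qed

lemma exp_neg_le_one_minus:
  fixes x c :: real
  assumes "0 \<le> x" "x < 1" "x / (1 - x) \<le> c"
  shows "exp (- c) \<le> 1 - x"
proof -
  have "1 + x / (1 - x) \<le> exp (x / (1 - x))" by (rule exp_ge_add_one_self)
  then have "exp (- (x / (1 - x))) \<le> 1 - x"
    using assms(1,2) by (simp add: exp_minus field_simps)
  moreover have "exp (- c) \<le> exp (- (x / (1 - x)))" using assms(3) by simp
  ultimately show ?thesis by linarith
qed

lemma exp_le_prod_one_minus:
  fixes x :: "nat \<Rightarrow> real"
  assumes "\<And>j. j < K \<Longrightarrow> 0 \<le> x j \<and> x j \<le> s * r ^ j" "0 \<le> s" "s < 1" "0 \<le> r" "r < 1"
  shows "exp (- (s / ((1 - s) * (1 - r)))) \<le> (\<Prod>j<K. 1 - x j)"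
proof -
  have each: "exp (- (s * r ^ j / (1 - s))) \<le> 1 - x j" if "j < K" for j
  proof (rule exp_neg_le_one_minus)
    have "s * r ^ j \<le> s" using assms(2,4,5) by (simp add: mult_left_le power_le_one)
    then have xs: "x j \<le> s" using assms(1)[OF that] by linarith
    show "0 \<le> x j" using assms(1)[OF that] by simp
    show "x j < 1" using xs assms(3) by simp
    show "x j / (1 - x j) \<le> s * r ^ j / (1 - s)"
      by (rule frac_le) (use assms(1)[OF that] xs assms(3) in auto)
  qed
  have "(\<Sum>j<K. s * r ^ j / (1 - s)) = s / (1 - s) * (\<Sum>j<K. r ^ j)"
    by (simp add: sum_distrib_left sum_divide_distrib)
  also have "\<dots> \<le> s / (1 - s) * (1 / (1 - r))"
    by (rule mult_left_mono[OF sum_power_le_inverse_one_minus[OF assms(4,5)]]) (use assms in auto)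
  finally have "exp (- (s / ((1 - s) * (1 - r)))) \<le> exp (- (\<Sum>j<K. s * r ^ j / (1 - s)))"
    by simp
  also have "\<dots> = (\<Prod>j<K. exp (- (s * r ^ j / (1 - s))))"
    by (simp add: exp_sum[symmetric] sum_negf)
  also have "\<dots> \<le> (\<Prod>j<K. 1 - x j)"
    by (rule prod_mono) (use each in auto)
  finally show ?thesis .
qed

lemma qpoch_0 [simp]: "qpoch x q 0 = 1"
  by (simp add: qpoch_def)

lemma qpoch_Suc: "qpoch x q (Suc k) = qpoch x q k * (1 - x * q ^ k)"
  by (simp add: qpoch_def)

lemma qpoch_Suc_shift: "qpoch x q (Suc k) = (1 - x) * qpoch (x * q) q k"
  unfolding qpoch_def by (subst prod.lessThan_Suc_shift) (simp add: mult.assoc)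

lemma qpoch_shift: "qpoch (x * q) q k * (1 - x) = qpoch x q k * (1 - x * q ^ k)"
  using qpoch_Suc[of x q k] qpoch_Suc_shift[of x q k] by (simp add: mult.commute)

lemma qpoch_nonzero: "(\<And>j. j < k \<Longrightarrow> 1 - x * q ^ j \<noteq> 0) \<Longrightarrow> qpoch x q k \<noteq> 0"
  unfolding qpoch_def by (simp add: prod_zero_iff)

lemma norm_qpoch_le_exp:
  fixes x q :: complex
  assumes "norm q < 1" "norm x \<le> 1"
  shows "norm (qpoch x q K) \<le> exp (1 / (1 - norm q))"
proof -
  have "norm (qpoch x q K) = (\<Prod>j<K. norm (1 - x * q ^ j))"
    by (simp add: qpoch_def prod_norm)
  also have "\<dots> \<le> (\<Prod>j<K. 1 + norm q ^ j)"
  proof (rule prod_mono)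
    fix j
    have "norm (x * q ^ j) \<le> norm q ^ j"
      using assms(2) by (simp add: norm_mult norm_power mult_left_le_one_le)
    then show "0 \<le> norm (1 - x * q ^ j) \<and> norm (1 - x * q ^ j) \<le> 1 + norm q ^ j"
      using norm_triangle_ineq4[of 1 "x * q ^ j"] by simp
  qed
  also have "\<dots> \<le> exp (1 / (1 - norm q))"
    by (rule prod_one_plus_le_exp) (use assms(1) in auto)
  finally show ?thesis .
qed

lemma exp_le_norm_qpoch:
  fixes x q :: complex
  assumes "norm q < 1" "norm x \<le> s" "s < 1"
  shows "exp (- (s / ((1 - s) * (1 - norm q)))) \<le> norm (qpoch x q K)"
proof -
  have "exp (- (s / ((1 - s) * (1 - norm q)))) \<le> (\<Prod>j<K. 1 - norm x * norm q ^ j)"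
    by (rule exp_le_prod_one_minus)
      (use assms in \<open>auto intro: mult_right_mono order_trans[OF norm_ge_zero]\<close>)
  also have "\<dots> \<le> (\<Prod>j<K. norm (1 - x * q ^ j))"
  proof (rule prod_mono)
    fix j
    have "norm x * norm q ^ j \<le> 1"
      using assms by (intro mult_le_one) (auto simp: power_le_one)
    then show "0 \<le> 1 - norm x * norm q ^ j \<and> 1 - norm x * norm q ^ j \<le> norm (1 - x * q ^ j)"
      using norm_triangle_ineq2[of 1 "x * q ^ j"] by (simp add: norm_mult norm_power)
  qed
  also have "\<dots> = norm (qpoch x q K)"
    by (simp add: qpoch_def prod_norm)
  finally show ?thesis .
qed

section \<open>The truncated identity\<close>

locale q_base =
  fixes q :: complex
  assumes q_nonzero: "q \<noteq> 0" and norm_q_less_1: "norm q < 1"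
begin

lemma one_minus_q_power_nonzero:
  assumes "1 \<le> k"
  shows "1 - q ^ k \<noteq> 0"
proof
  assume "1 - q ^ k = 0"
  then have "norm (q ^ k) = 1" by simp
  moreover have "norm (q ^ k) < 1"
    using assms norm_q_less_1 by (simp add: norm_power power_less_one_iff)
  ultimately show False by simp
qed

lemma q_power_tendsto_0: "(\<lambda>n. q ^ n) \<longlonglongrightarrow> 0"
  using norm_q_less_1 by (rule LIMSEQ_power_zero)

lemma qpoch_q_nonzero: "qpoch q q k \<noteq> 0"
  by (rule qpoch_nonzero) (metis one_minus_q_power_nonzero power_Suc le_add1 plus_1_eq_Suc)

definition qpoch_regular :: "complex \<Rightarrow> bool" where
  "qpoch_regular w \<longleftrightarrow> (\<forall>j. 1 - w * q ^ j \<noteq> 0)"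

lemma qpoch_regular_qpoch_nonzero: "qpoch_regular w \<Longrightarrow> qpoch (w * q ^ d) q k \<noteq> 0"
  by (rule qpoch_nonzero) (simp add: qpoch_regular_def mult.assoc power_add[symmetric])

definition qbinom :: "nat \<Rightarrow> nat \<Rightarrow> complex" where
  "qbinom n k = qpoch (q ^ (n + 1 - k)) q k / qpoch q q k"

lemma qbinom_0_right [simp]: "qbinom n 0 = 1"
  by (simp add: qbinom_def)

lemma qbinom_Suc_Suc:
  assumes "j \<le> n"
  shows "qbinom (Suc n) (Suc j) * (1 - q ^ Suc j) = qbinom n j * (1 - q ^ Suc n)"
proof -
  have "q ^ (n + 1 - j) * q ^ j = q ^ Suc n"
    using assms by (simp flip: power_add)
  moreover have "qpoch q q j \<noteq> 0" "1 - q ^ Suc j \<noteq> 0"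
    using qpoch_q_nonzero one_minus_q_power_nonzero[of "Suc j"] by auto
  ultimately show ?thesis
    by (simp add: qbinom_def qpoch_Suc field_simps)
qed

lemma qbinom_div_qpoch_diff:
  assumes "k \<le> n" "qpoch_regular w"
  shows "qbinom (Suc n) k / qpoch (w * q ^ (Suc n - k)) q k - qbinom n k / qpoch (w * q ^ (n - k)) q k
    = (1 - q ^ k) * (1 - w / q) * q ^ (Suc n - k) / ((1 - w * q ^ n) * (1 - q ^ Suc n))
       * (qbinom (Suc n) k / qpoch (w * q ^ (n - k)) q k)"
proof -
  define a b where "a = q ^ (n - k)" and "b = q ^ k"
  have pw: "q ^ n = a * b" "q ^ (Suc n - k) = a * q" "q ^ Suc n = a * b * q"
    using assms(1) by (simp_all add: a_def b_def Suc_diff_le power_add[symmetric])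
  define E X Qk where "E = qpoch (w * a) q k" and "X = qpoch (a * q * q) q k" and "Qk = qpoch q q k"
  have ab: "w * a * b = w * q ^ n" "a * b * q = q ^ Suc n"
    by (simp_all add: pw mult.assoc)
  have nz: "1 - w * a \<noteq> 0" "1 - w * a * b \<noteq> 0" "1 - a * b * q \<noteq> 0"
    using assms(2) one_minus_q_power_nonzero[of "Suc n"] unfolding qpoch_regular_def ab
    by (auto simp: a_def)
  have E: "E \<noteq> 0" "Qk \<noteq> 0"
    using qpoch_regular_qpoch_nonzero[OF assms(2)] qpoch_q_nonzero by (auto simp: E_def a_def Qk_def)
  have "qpoch (w * a * q) q k * (1 - w * a) = E * (1 - w * a * b)"
    unfolding E_def b_def by (rule qpoch_shift)
  then have E': "qpoch (w * q ^ (Suc n - k)) q k = E * (1 - w * a * b) / (1 - w * a)"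
    using nz(1) by (simp add: pw(2) mult.assoc eq_divide_eq)
  have "qpoch (a * q) q k * (1 - a * b * q) = X * (1 - a * q)"
    using qpoch_shift[of "a * q" q k] unfolding X_def b_def by (simp add: mult_ac)
  then have Y: "qpoch (a * q) q k = X * (1 - a * q) / (1 - a * b * q)"
    using nz(3) by (simp add: eq_divide_eq)
  have "q ^ (Suc n + 1 - k) = a * q * q" "q ^ (n + 1 - k) = a * q"
    using assms(1) by (simp_all add: a_def Suc_diff_le)
  then have qb: "qbinom (Suc n) k = X / Qk" "qbinom n k = qpoch (a * q) q k / Qk"
    by (simp_all add: qbinom_def X_def Qk_def)
  have L1: "qbinom (Suc n) k / qpoch (w * q ^ (Suc n - k)) q k = X / (Qk * E) * ((1 - w * a) / (1 - w * a * b))"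
    unfolding qb E' using nz E by (simp add: field_simps)
  have L2: "qbinom n k / qpoch (w * q ^ (n - k)) q k = X / (Qk * E) * ((1 - a * q) / (1 - a * b * q))"
    unfolding qb Y E_def[symmetric] a_def[symmetric] using nz E by (simp add: field_simps)
  have num: "(1 - b) * (1 - w / q) * (a * q) = (1 - b) * (q - w) * a"
    using q_nonzero by (simp add: field_simps)
  have br: "(1 - w * a) / (1 - w * a * b) - (1 - a * q) / (1 - a * b * q)
      = (1 - b) * (1 - w / q) * (a * q) / ((1 - w * a * b) * (1 - a * b * q))"
    unfolding num diff_frac_eq[OF nz(2,3)] by (rule arg_cong[where f="\<lambda>x. x / _"]) algebra
  have "qbinom (Suc n) k / qpoch (w * q ^ (Suc n - k)) q k - qbinom n k / qpoch (w * q ^ (n - k)) q k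
      = X / (Qk * E) * ((1 - b) * (1 - w / q) * (a * q) / ((1 - w * a * b) * (1 - a * b * q)))"
    by (simp only: L1 L2 right_diff_distrib[symmetric] br)
  also have "\<dots> = (1 - q ^ k) * (1 - w / q) * q ^ (Suc n - k) / ((1 - w * q ^ n) * (1 - q ^ Suc n))
       * (qbinom (Suc n) k / qpoch (w * q ^ (n - k)) q k)"
    unfolding pw qb(1) b_def[symmetric] a_def[symmetric] E_def[symmetric] by (simp add: mult_ac)
  finally show ?thesis .
qed

definition homog_qpoch :: "nat \<Rightarrow> complex \<Rightarrow> nat \<Rightarrow> complex" where
  "homog_qpoch m w k = (\<Prod>j<k. w - q ^ (m + j))"

lemma qpoch_times_power_eq_homog_qpoch:
  assumes "w \<noteq> 0"
  shows "qpoch (q ^ m / w) q k * w ^ k = homog_qpoch m w k"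
proof -
  have "qpoch (q ^ m / w) q k * w ^ k = (\<Prod>j<k. (1 - q ^ m / w * q ^ j) * w)"
    unfolding qpoch_def by (simp add: prod.distrib)
  also have "\<dots> = homog_qpoch m w k" unfolding homog_qpoch_def
    by (rule prod.cong) (use assms in \<open>auto simp: field_simps power_add\<close>)
  finally show ?thesis .
qed

lemma homog_qpoch_Suc_left: "homog_qpoch (Suc m) w k = q ^ k * homog_qpoch m (w / q) k"
proof -
  have "homog_qpoch (Suc m) w k = (\<Prod>j<k. q * (w / q - q ^ (m + j)))"
    unfolding homog_qpoch_def by (rule prod.cong) (use q_nonzero in \<open>auto simp: field_simps\<close>)
  then show ?thesis unfolding homog_qpoch_def by (simp add: prod.distrib)
qed

lemma homog_qpoch_0_Suc: "homog_qpoch 0 w (Suc k) = (w - 1) * q ^ k * homog_qpoch 0 (w / q) k"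
proof -
  have "homog_qpoch 0 w (Suc k) = (w - 1) * homog_qpoch (Suc 0) w k"
    unfolding homog_qpoch_def by (subst prod.lessThan_Suc_shift) simp
  then show ?thesis by (simp add: homog_qpoch_Suc_left)
qed

text \<open>\<open>qpoch_below m w\<close> is $(w q^{-m};q)_m = \prod_{j=1}^m (1 - w q^{-j})$.\<close>
definition qpoch_below :: "nat \<Rightarrow> complex \<Rightarrow> complex" where
  "qpoch_below m w = qpoch (w * q powi (- int m)) q m"

lemma qpoch_below_Suc: "qpoch_below (Suc m) w = qpoch_below m (w / q) * (1 - w / q)"
proof -
  have inv: "q powi (- int n) = inverse (q ^ n)" for n
    by (metis power_int_minus power_int_of_nat)
  have "w * q powi (- int (Suc m)) = w / q * q powi (- int m)"
    "w * q powi (- int (Suc m)) * q ^ m = w / q"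
    unfolding inv using q_nonzero by (simp_all add: field_simps)
  then show ?thesis unfolding qpoch_below_def qpoch_Suc by simp
qed

definition chain_factor :: "complex \<Rightarrow> nat \<Rightarrow> nat \<Rightarrow> complex" where
  "chain_factor w i l = q ^ l / ((1 - w * q powi (int l - int i)) * (1 - q ^ l))"

lemma chain_factor_1: "chain_factor w 1 (Suc n) = q ^ Suc n / ((1 - w * q ^ n) * (1 - q ^ Suc n))"
  unfolding chain_factor_def by simp

lemma chain_factor_Suc: "chain_factor w (Suc i) = chain_factor (w / q) i"
proof
  fix l
  have e: "int l - int (Suc i) = (int l - int i) - 1" by simp
  have "q powi (int l - int (Suc i)) = q powi (int l - int i) / q"
    unfolding e using power_int_diff[of q "int l - int i" 1] q_nonzero by simp
  then show "chain_factor w (Suc i) l = chain_factor (w / q) i l"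
    unfolding chain_factor_def by simp
qed

definition trunc_term :: "nat \<Rightarrow> complex \<Rightarrow> nat \<Rightarrow> nat \<Rightarrow> complex" where
  "trunc_term m w n k = homog_qpoch m w k * qbinom n k / ((1 - q ^ k) ^ m * qpoch (w * q ^ (n - k)) q k)"

definition closed_form :: "nat \<Rightarrow> complex \<Rightarrow> nat \<Rightarrow> complex" where
  "closed_form m w n = - (\<Sum>k=1..n. trunc_term m w n k) / qpoch_below m w"

lemma trunc_term_0_0 [simp]: "trunc_term 0 w n 0 = 1"
  by (simp add: trunc_term_def homog_qpoch_def)

lemma trunc_term_Suc_diff:
  assumes "1 \<le> k" "k \<le> n" "qpoch_regular w"
  shows "trunc_term (Suc m) w (Suc n) k - trunc_term (Suc m) w n k
    = chain_factor w 1 (Suc n) * (1 - w / q) * trunc_term m (w / q) (Suc n) k"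
proof -
  define c G u Z E where "c = homog_qpoch m (w / q) k"
    and "G = qbinom (Suc n) k / qpoch (w * q ^ (n - k)) q k" and "u = 1 - q ^ k"
    and "Z = (1 - w * q ^ n) * (1 - q ^ Suc n)" and "E = qpoch (w * q ^ (n - k)) q k"
  have nz: "u \<noteq> 0" "Z \<noteq> 0" "E \<noteq> 0"
    using assms one_minus_q_power_nonzero[of "Suc n"] one_minus_q_power_nonzero[of k]
      qpoch_regular_qpoch_nonzero[OF assms(3)]
    by (auto simp: u_def Z_def E_def qpoch_regular_def)
  have pw: "q ^ Suc n = q ^ k * q ^ (Suc n - k)" "w / q * q ^ (Suc n - k) = w * q ^ (n - k)"
    using assms(2) q_nonzero by (simp_all add: Suc_diff_le flip: power_add)
  have T: "trunc_term (Suc m) w n' k = q ^ k * c / u ^ Suc m * (qbinom n' k / qpoch (w * q ^ (n' - k)) q k)" for n'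
    by (simp add: trunc_term_def homog_qpoch_Suc_left c_def u_def)
  have "trunc_term (Suc m) w (Suc n) k - trunc_term (Suc m) w n k
      = q ^ k * c / u ^ Suc m * (u * (1 - w / q) * q ^ (Suc n - k) / Z * G)"
    unfolding T right_diff_distrib[symmetric] qbinom_div_qpoch_diff[OF assms(2,3)] u_def Z_def G_def ..
  also have "\<dots> = q ^ k * q ^ (Suc n - k) / Z * (1 - w / q) * (c * qbinom (Suc n) k / (u ^ m * E))"
    using nz by (simp add: G_def E_def field_simps)
  also have "\<dots> = chain_factor w 1 (Suc n) * (1 - w / q) * trunc_term m (w / q) (Suc n) k"
    unfolding chain_factor_1 trunc_term_def pw c_def u_def Z_def E_def ..
  finally show ?thesis .
qed


lemma trunc_term_Suc_last:
  assumes "qpoch_regular w" "1 - w / q \<noteq> 0"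
  shows "trunc_term (Suc m) w (Suc n) (Suc n)
    = chain_factor w 1 (Suc n) * (1 - w / q) * trunc_term m (w / q) (Suc n) (Suc n)"
proof -
  define c u A t P where "c = homog_qpoch m (w / q) (Suc n) * qbinom (Suc n) (Suc n)"
    and "u = 1 - q ^ Suc n" and "A = 1 - w * q ^ n" and "t = 1 - w / q" and "P = qpoch w q n"
  have nz: "u \<noteq> 0" "A \<noteq> 0" "t \<noteq> 0" "P \<noteq> 0"
    using one_minus_q_power_nonzero[of "Suc n"] assms qpoch_regular_qpoch_nonzero[OF assms(1), of 0 n]
    by (auto simp: qpoch_regular_def u_def A_def t_def P_def)
  have "qpoch (w / q) q (Suc n) = t * P"
    using qpoch_Suc_shift[of "w / q" q n] q_nonzero by (simp add: t_def P_def)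
  then have "trunc_term m (w / q) (Suc n) (Suc n) = c / (u ^ m * (t * P))"
    by (simp add: trunc_term_def c_def u_def)
  moreover have "trunc_term (Suc m) w (Suc n) (Suc n) = q ^ Suc n * c / (u ^ Suc m * (P * A))"
    by (simp add: trunc_term_def homog_qpoch_Suc_left qpoch_Suc c_def u_def P_def A_def)
  moreover have "q ^ Suc n * c / (u ^ Suc m * (P * A)) = q ^ Suc n / (A * u) * t * (c / (u ^ m * (t * P)))"
    using nz by (simp add: field_simps)
  ultimately show ?thesis
    unfolding chain_factor_1 by (simp add: t_def A_def u_def mult.commute)
qed

lemma closed_form_Suc_diff:
  assumes "qpoch_regular w" "qpoch_below (Suc m) w \<noteq> 0"
  shows "closed_form (Suc m) w (Suc n) - closed_form (Suc m) w n
    = chain_factor w 1 (Suc n) * closed_form m (w / q) (Suc n)"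
proof -
  define F t D where "F = chain_factor w 1 (Suc n)" and "t = 1 - w / q" and "D = qpoch_below m (w / q)"
  have nz: "t \<noteq> 0" "D \<noteq> 0"
    using assms(2) unfolding qpoch_below_Suc t_def D_def by auto
  have "(\<Sum>k=1..Suc n. trunc_term (Suc m) w (Suc n) k) - (\<Sum>k=1..n. trunc_term (Suc m) w n k)
     = (\<Sum>k=1..n. trunc_term (Suc m) w (Suc n) k - trunc_term (Suc m) w n k)
       + trunc_term (Suc m) w (Suc n) (Suc n)"
    by (simp add: sum_subtractf)
  also have "\<dots> = F * t * (\<Sum>k=1..Suc n. trunc_term m (w / q) (Suc n) k)"
    using trunc_term_Suc_diff[OF _ _ assms(1)] trunc_term_Suc_last[OF assms(1) nz(1)[unfolded t_def]]
    by (simp add: sum_distrib_left distrib_left F_def t_def)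
  finally have "closed_form (Suc m) w (Suc n) - closed_form (Suc m) w n
      = - (F * t * (\<Sum>k=1..Suc n. trunc_term m (w / q) (Suc n) k)) / (D * t)"
    unfolding closed_form_def qpoch_below_Suc D_def[symmetric] t_def[symmetric]
      diff_divide_distrib[symmetric] minus_diff_minus by simp
  also have "\<dots> = F * closed_form m (w / q) (Suc n)"
    using nz unfolding closed_form_def D_def[symmetric] by (simp add: field_simps)
  finally show ?thesis unfolding F_def .
qed

definition vandermonde_sum :: "complex \<Rightarrow> nat \<Rightarrow> complex" where
  "vandermonde_sum w n = (\<Sum>k\<le>n. trunc_term 0 w n k)"

definition vandermonde_coeff :: "complex \<Rightarrow> nat \<Rightarrow> complex" where
  "vandermonde_coeff w n = (w - 1) * q ^ n / ((1 - w * q ^ n) * (1 - w * q ^ (n - 1))) * (1 - w / q)"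

lemma trunc_term_0_Suc_diff:
  assumes "j < n" "qpoch_regular w"
  shows "trunc_term 0 w (Suc n) (Suc j) - trunc_term 0 w n (Suc j)
    = vandermonde_coeff w n * trunc_term 0 (w / q) n j"
proof -
  define h X Y E a b A C t where "h = homog_qpoch 0 (w / q) j"
    and "X = qbinom (Suc n) (Suc j)" and "Y = qbinom n j" and "E = qpoch (w * q ^ (n - Suc j)) q j"
    and "a = 1 - q ^ Suc j" and "b = 1 - q ^ Suc n" and "A = 1 - w * q ^ n" and "C = 1 - w * q ^ (n - 1)"
    and "t = 1 - w / q"
  have X: "X = Y * b / a"
    using qbinom_Suc_Suc[of j n] assms(1) one_minus_q_power_nonzero[of "Suc j"]
    by (simp add: X_def Y_def a_def b_def eq_divide_eq)
  have nz: "a \<noteq> 0" "b \<noteq> 0" "A \<noteq> 0" "C \<noteq> 0" "E \<noteq> 0"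
    using one_minus_q_power_nonzero[of "Suc j"] one_minus_q_power_nonzero[of "Suc n"] assms(2)
      qpoch_regular_qpoch_nonzero[OF assms(2)]
    by (auto simp: a_def b_def A_def C_def E_def qpoch_regular_def simp del: power_Suc)
  have "n - j = Suc (n - Suc j)"
    using assms(1) by simp
  then have pw: "w * q ^ (n - Suc j) * q ^ j = w * q ^ (n - 1)" "w / q * q ^ (n - j) = w * q ^ (n - Suc j)"
    using assms(1) q_nonzero by (simp_all add: mult.assoc flip: power_add)
  have pn: "q ^ j * q ^ (n - j) = q ^ n"
    using assms(1) by (simp flip: power_add)
  have E': "qpoch (w * q ^ (n - Suc j)) q (Suc j) = E * C"
    unfolding E_def C_def qpoch_Suc pw(1) ..
  have "trunc_term 0 w (Suc n) (Suc j) - trunc_term 0 w n (Suc j) = homog_qpoch 0 w (Suc j) *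
     (qbinom (Suc n) (Suc j) / qpoch (w * q ^ (Suc n - Suc j)) q (Suc j)
      - qbinom n (Suc j) / qpoch (w * q ^ (n - Suc j)) q (Suc j))"
    by (simp add: trunc_term_def right_diff_distrib)
  also have "\<dots> = (w - 1) * q ^ j * h * (a * t * q ^ (n - j) / (A * b) * (X / (E * C)))"
    using qbinom_div_qpoch_diff[of "Suc j" n w, OF _ assms(2)] assms(1)
    unfolding homog_qpoch_0_Suc E'[symmetric]
    by (simp add: h_def X_def a_def b_def A_def t_def)
  also have "\<dots> = (w - 1) * (q ^ j * q ^ (n - j)) / (A * C) * t * (h * Y / E)"
    unfolding X using nz by (simp add: field_simps)
  also have "\<dots> = vandermonde_coeff w n * trunc_term 0 (w / q) n j"
    unfolding vandermonde_coeff_def trunc_term_def pn pw(2) h_def Y_def E_def A_def C_def t_def by simp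
  finally show ?thesis .
qed

lemma trunc_term_0_Suc_last:
  assumes "1 \<le> n" "qpoch_regular w" "1 - w / q \<noteq> 0"
  shows "trunc_term 0 w (Suc n) (Suc n) = vandermonde_coeff w n * trunc_term 0 (w / q) n n"
proof -
  define h Y P A C t where "h = homog_qpoch 0 (w / q) n" and "Y = qbinom n n" and "P = qpoch w q n"
    and "A = 1 - w * q ^ n" and "C = 1 - w * q ^ (n - 1)" and "t = 1 - w / q"
  have nz: "A \<noteq> 0" "C \<noteq> 0" "t \<noteq> 0" "P \<noteq> 0"
    using assms(2,3) qpoch_regular_qpoch_nonzero[OF assms(2), of 0 n]
    by (auto simp: A_def C_def t_def P_def qpoch_regular_def)
  have "w / q * q ^ n = w * q ^ (n - 1)"
    using assms(1) q_nonzero by (cases n) simp_all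
  then have "qpoch (w / q) q n * C = t * P"
    using qpoch_shift[of "w / q" q n] q_nonzero by (simp add: C_def t_def P_def mult.commute)
  then have Q: "qpoch (w / q) q n = t * P / C"
    using nz(2) by (simp add: eq_divide_eq)
  have coeff: "vandermonde_coeff w n = (w - 1) * q ^ n / (A * C) * t"
    by (simp add: vandermonde_coeff_def A_def C_def t_def)
  have "qbinom (Suc n) (Suc n) = Y"
    using qbinom_Suc_Suc[of n n] one_minus_q_power_nonzero[of "Suc n"] by (simp add: Y_def)
  then have "trunc_term 0 w (Suc n) (Suc n) = (w - 1) * q ^ n * h * Y / (P * A)"
    by (simp add: trunc_term_def homog_qpoch_0_Suc qpoch_Suc h_def P_def A_def)
  also have "\<dots> = vandermonde_coeff w n * (h * Y / qpoch (w / q) q n)"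
    unfolding Q coeff using nz by (simp add: field_simps)
  also have "\<dots> = vandermonde_coeff w n * trunc_term 0 (w / q) n n"
    by (simp add: trunc_term_def h_def Y_def)
  finally show ?thesis .
qed

lemma vandermonde_sum_Suc:
  assumes "1 \<le> n" "qpoch_regular w" "1 - w / q \<noteq> 0"
  shows "vandermonde_sum w (Suc n) = vandermonde_sum w n + vandermonde_coeff w n * vandermonde_sum (w / q) n"
proof -
  obtain n' where n: "n = Suc n'" using assms(1) by (cases n) auto
  have "(\<Sum>k\<le>n. trunc_term 0 w (Suc n) k) - (\<Sum>k\<le>n. trunc_term 0 w n k)
      = (\<Sum>i\<le>n'. trunc_term 0 w (Suc n) (Suc i) - trunc_term 0 w n (Suc i))"
    unfolding n sum_subtractf[symmetric] by (subst sum.atMost_Suc_shift) simp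
  also have "\<dots> = vandermonde_coeff w n * (\<Sum>i\<le>n'. trunc_term 0 (w / q) n i)"
    unfolding sum_distrib_left using trunc_term_0_Suc_diff[OF _ assms(2)] n by simp
  finally have "(\<Sum>k\<le>n. trunc_term 0 w (Suc n) k)
      = vandermonde_sum w n + vandermonde_coeff w n * (\<Sum>i\<le>n'. trunc_term 0 (w / q) n i)"
    unfolding vandermonde_sum_def by (simp add: algebra_simps)
  then have "vandermonde_sum w (Suc n) = vandermonde_sum w n
      + vandermonde_coeff w n * ((\<Sum>i\<le>n'. trunc_term 0 (w / q) n i) + trunc_term 0 (w / q) n n)"
    using trunc_term_0_Suc_last[OF assms] unfolding vandermonde_sum_def by (simp add: algebra_simps)
  then show ?thesis unfolding vandermonde_sum_def n by simp
qed

lemma qpoch_regular_div: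
  assumes "qpoch_regular w" "1 - w / q \<noteq> 0"
  shows "qpoch_regular (w / q)"
  unfolding qpoch_regular_def
proof
  fix j
  show "1 - w / q * q ^ j \<noteq> 0"
  proof (cases j)
    case (Suc i)
    then have "w / q * q ^ j = w * q ^ i" using q_nonzero by simp
    then show ?thesis using assms(1) unfolding qpoch_regular_def by simp
  qed (use assms(2) in simp)
qed

lemma vandermonde_sum_q:
  assumes "1 \<le> n"
  shows "vandermonde_sum q n = 0"
proof -
  have "homog_qpoch 0 q k = 0" if "2 \<le> k" for k
    using that unfolding homog_qpoch_def by (subst prod_zero_iff) (auto intro!: bexI[of _ 1])
  then have "vandermonde_sum q n = (\<Sum>k\<in>{0, 1}. trunc_term 0 q n k)"
    unfolding vandermonde_sum_def
    by (intro sum.mono_neutral_left[symmetric]) (use assms in \<open>auto simp: trunc_term_def\<close>)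
  also have "\<dots> = 1 + (q - 1) * ((1 - q ^ n) / (1 - q)) / (1 - q ^ n)"
  proof -
    have "q * q ^ (n - 1) = q ^ n" using assms by (cases n) auto
    then show ?thesis by (simp add: trunc_term_def homog_qpoch_def qbinom_def qpoch_def)
  qed
  also have "\<dots> = 1 + (q - 1) / (1 - q)"
    using one_minus_q_power_nonzero[of n] assms by simp
  also have "(q - 1) / (1 - q) = - 1"
    using one_minus_q_power_nonzero[of 1] by (simp add: divide_eq_eq)
  finally show ?thesis by simp
qed

text \<open>The induction on \<open>n\<close> is over all \<open>w\<close> at once, since the recursion passes from \<open>w\<close> to
  \<open>w / q\<close>; at \<open>w = q\<close>, where \<open>1 - w / q = 0\<close>, the sum is computed directly.\<close>
lemma vandermonde_sum_eq_0:
  assumes "1 \<le> n" "qpoch_regular w"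
  shows "vandermonde_sum w n = 0"
  using assms
proof (induction n arbitrary: w rule: nat_induct_at_least)
  case base
  have "1 - w \<noteq> 0" using base unfolding qpoch_regular_def by (metis mult.right_neutral power_0)
  moreover have "qbinom 1 1 = 1" unfolding qbinom_def using qpoch_q_nonzero[of 1] by simp
  ultimately show ?case
    by (simp add: vandermonde_sum_def trunc_term_def homog_qpoch_def qpoch_def field_simps)
next
  case (Suc n)
  note n = Suc(1) and IH = Suc(2) and regular = Suc(3)
  show ?case
  proof (cases "w = q")
    case True
    then show ?thesis using vandermonde_sum_q[of "Suc n"] by simp
  next
    case False
    then have t: "1 - w / q \<noteq> 0" using q_nonzero by (simp add: field_simps)
    show ?thesis
      unfolding vandermonde_sum_Suc[OF n regular t]
      using IH[OF regular] IH[OF qpoch_regular_div[OF regular t]] by simp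
  qed
qed

lemma closed_form_0:
  assumes "1 \<le> n" "qpoch_regular w"
  shows "closed_form 0 w n = 1"
proof -
  have "{..n} = insert 0 {1..n}" by auto
  then have "1 + (\<Sum>k=1..n. trunc_term 0 w n k) = 0"
    using vandermonde_sum_eq_0[OF assms] unfolding vandermonde_sum_def by simp
  then show ?thesis
    unfolding closed_form_def qpoch_below_def by (simp add: add_eq_0_iff)
qed

theorem chain_sum_eq_closed_form:
  assumes "qpoch_regular w" "qpoch_below m w \<noteq> 0" "1 \<le> n \<or> 1 \<le> m"
  shows "chain_sum m (chain_factor w) n = closed_form m w n"
  using assms
proof (induction m arbitrary: w n)
  case 0
  then show ?case using closed_form_0 by (simp add: chain_sum_0)
next
  case (Suc m)
  note regular = Suc.prems(1) and below = Suc.prems(2)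
  have t: "1 - w / q \<noteq> 0" and D: "qpoch_below m (w / q) \<noteq> 0"
    using below unfolding qpoch_below_Suc by auto
  have IH: "chain_sum m (chain_factor (w / q)) l = closed_form m (w / q) l" if "1 \<le> l" for l
    using Suc.IH[OF qpoch_regular_div[OF regular t] D] that by simp
  show ?case
  proof (induction n)
    case 0
    then show ?case by (simp add: chain_sum_Suc closed_form_def)
  next
    case (Suc n)
    have "chain_sum (Suc m) (chain_factor w) (Suc n)
        = chain_sum (Suc m) (chain_factor w) n + chain_factor w 1 (Suc n) * closed_form m (w / q) (Suc n)"
      using IH[of "Suc n"] unfolding chain_sum_Suc chain_factor_Suc by simp
    then show ?case
      using Suc.IH closed_form_Suc_diff[OF regular below, of n] by (simp add: algebra_simps)
  qed
qed

section \<open>Passage to the limit\<close>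

lemma summable_norm_chain_factor: "summable (\<lambda>l. norm (chain_factor w i l))"
proof (rule summable_comparison_test_ev)
  have "(\<lambda>l. w * q powi (int l - int i)) = (\<lambda>l. w / q ^ i * q ^ l)"
    using q_nonzero by (intro ext) (simp add: power_int_diff)
  moreover have "(\<lambda>l. w / q ^ i * q ^ l) \<longlonglongrightarrow> 0"
    by (intro tendsto_mult_right_zero q_power_tendsto_0)
  ultimately have "(\<lambda>l. norm (w * q powi (int l - int i))) \<longlonglongrightarrow> 0"
    by (simp add: tendsto_norm_zero)
  then have "eventually (\<lambda>l. norm (w * q powi (int l - int i)) < 1/2) sequentially"
    by (rule order_tendstoD) simp
  moreover have "eventually (\<lambda>l. norm (q ^ l) < 1/2) sequentially"
    using tendsto_norm_zero[OF q_power_tendsto_0] by (rule order_tendstoD) simp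
  ultimately show "eventually (\<lambda>l. norm (norm (chain_factor w i l)) \<le> 4 * norm q ^ l) sequentially"
  proof eventually_elim
    case (elim l)
    have "1/2 \<le> norm (1 - w * q powi (int l - int i))" "1/2 \<le> norm (1 - q ^ l)"
      using norm_triangle_ineq2[of 1 "w * q powi (int l - int i)"] norm_triangle_ineq2[of 1 "q ^ l"] elim
      by simp_all
    then have "1/2 * (1/2) \<le> norm (1 - w * q powi (int l - int i)) * norm (1 - q ^ l)"
      by (intro mult_mono) auto
    then have "norm q ^ l / (norm (1 - w * q powi (int l - int i)) * norm (1 - q ^ l)) \<le> norm q ^ l / (1/4)"
      by (intro divide_left_mono) auto
    then show ?case unfolding chain_factor_def by (simp add: norm_divide norm_mult norm_power)
  qed
  show "summable (\<lambda>l. 4 * norm q ^ l)"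
    using norm_q_less_1 by (intro summable_mult summable_geometric) simp
qed

definition chain_term :: "complex \<Rightarrow> nat \<Rightarrow> (nat \<Rightarrow> nat) \<Rightarrow> complex" where
  "chain_term w m k = (\<Prod>i\<in>{1..m}. chain_factor w i (k i))"

lemma chain_term_summable_on:
  assumes "1 \<le> m"
  shows "chain_term w m summable_on chain_idx m"
proof (rule abs_summable_summable)
  define h where "h l = (\<Sum>i\<in>{1..m}. norm (chain_factor w i l))" for l
  have hs: "summable h" unfolding h_def by (intro summable_sum summable_norm_chain_factor)
  have h0: "\<And>l. 0 \<le> h l" unfolding h_def by (auto intro: sum_nonneg)
  have factor_bound: "\<And>i l. i \<in> {1..m} \<Longrightarrow> 1 \<le> l \<Longrightarrow> 0 \<le> norm (chain_factor w i l) \<and> norm (chain_factor w i l) \<le> h l"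
    unfolding h_def by (auto intro!: member_le_sum)
  show "(\<lambda>x. norm (chain_term w m x)) summable_on chain_idx m"
  proof (rule nonneg_bdd_above_summable_on)
    show "bdd_above (sum (\<lambda>k. norm (chain_term w m k)) ` {F. F \<subseteq> chain_idx m \<and> finite F})"
    proof (rule bdd_aboveI2)
      fix F assume F: "F \<in> {F. F \<subseteq> chain_idx m \<and> finite F}"
      then obtain N where N: "F \<subseteq> bounded_chains m N"
        using finite_chains_subset_bounded_chains by blast
      have "(\<Sum>k\<in>F. norm (chain_term w m k)) \<le> (\<Sum>k\<in>bounded_chains m N. norm (chain_term w m k))"
        by (rule sum_mono2[OF finite_bounded_chains N]) auto
      also have "\<dots> = chain_sum m (\<lambda>i l. norm (chain_factor w i l)) N"
        unfolding chain_sum_def chain_term_def by (simp add: prod_norm)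
      also have "\<dots> \<le> (suminf h) ^ m" using chain_sum_nonneg_le_power[OF factor_bound hs h0] by auto
      finally show "(\<Sum>k\<in>F. norm (chain_term w m k)) \<le> (suminf h) ^ m" .
    qed
  qed auto
qed

definition series_term :: "nat \<Rightarrow> complex \<Rightarrow> nat \<Rightarrow> complex" where
  "series_term m z k = homog_qpoch m z (Suc k) / (qpoch_below m z * qpoch q q (Suc k) * (1 - q ^ Suc k) ^ m)"

definition trunc_ratio :: "complex \<Rightarrow> nat \<Rightarrow> nat \<Rightarrow> complex" where
  "trunc_ratio z n K = qpoch (q ^ (n + 1 - K)) q K / qpoch (z * q ^ (n - K)) q K"

definition trunc_series_term :: "nat \<Rightarrow> complex \<Rightarrow> nat \<Rightarrow> nat \<Rightarrow> complex" where
  "trunc_series_term m z k n = (if Suc k \<le> n then trunc_term m z n (Suc k) / qpoch_below m z else 0)"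

lemma series_term_altdef:
  assumes "z \<noteq> 0"
  shows "series_term m z k = qpoch (q ^ m / z) q (Suc k) * z ^ Suc k /
           (qpoch (z * q powi (- int m)) q m * qpoch q q (Suc k) * (1 - q ^ Suc k) ^ m)"
  unfolding series_term_def qpoch_below_def qpoch_times_power_eq_homog_qpoch[OF assms] ..

lemma trunc_series_term_eq:
  assumes "Suc k \<le> n" "qpoch_regular z" "qpoch_below m z \<noteq> 0"
  shows "trunc_series_term m z k n = series_term m z k * trunc_ratio z n (Suc k)"
proof -
  have n1: "qpoch q q (Suc k) \<noteq> 0" "1 - q ^ Suc k \<noteq> 0" "qpoch (z * q ^ (n - Suc k)) q (Suc k) \<noteq> 0"
    using qpoch_q_nonzero one_minus_q_power_nonzero[of "Suc k"] qpoch_regular_qpoch_nonzero[OF assms(2)] by auto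
  show ?thesis unfolding trunc_series_term_def series_term_def trunc_ratio_def trunc_term_def qbinom_def using assms(1,3) n1
    by (simp add: field_simps)
qed

lemma sum_trunc_series_term:
  "(\<Sum>k\<in>{1..n}. trunc_term m z n k) / qpoch_below m z = suminf (\<lambda>k. trunc_series_term m z k n)"
proof -
  have "suminf (\<lambda>k. trunc_series_term m z k n) = (\<Sum>k<n. trunc_series_term m z k n)"
    by (rule suminf_finite) (auto simp: trunc_series_term_def)
  also have "\<dots> = (\<Sum>k<n. trunc_term m z n (Suc k) / qpoch_below m z)"
    by (rule sum.cong) (auto simp: trunc_series_term_def)
  also have "\<dots> = (\<Sum>k\<in>{1..n}. trunc_term m z n k) / qpoch_below m z"
    by (simp add: sum_divide_distrib sum.atLeast1_atMost_eq)
  finally show ?thesis by simp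
qed

lemma trunc_ratio_tendsto_1: "(\<lambda>n. trunc_ratio z n K) \<longlonglongrightarrow> 1"
proof -
  define f where "f n = (\<Prod>j<K. 1 - q ^ n * (q * q ^ j / q ^ K)) / (\<Prod>j<K. 1 - q ^ n * (z * q ^ j / q ^ K))" for n
  have f: "f n = trunc_ratio z n K" if "K \<le> n" for n
  proof -
    have "q ^ n = q ^ (n - K) * q ^ K" using that by (simp flip: power_add)
    then have "q ^ (n + 1 - K) = q ^ n * q / q ^ K" "q ^ (n - K) = q ^ n / q ^ K"
      using that q_nonzero by (simp_all add: Suc_diff_le)
    then show ?thesis unfolding f_def trunc_ratio_def qpoch_def by (simp add: mult_ac)
  qed
  have "eventually (\<lambda>n. f n = trunc_ratio z n K) sequentially"
    using eventually_ge_at_top[of K] by (rule eventually_mono) (rule f)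
  moreover have "f \<longlonglongrightarrow> (\<Prod>j<K. 1 - 0 * (q * q ^ j / q ^ K)) / (\<Prod>j<K. 1 - 0 * (z * q ^ j / q ^ K))"
    unfolding f_def by (intro tendsto_intros q_power_tendsto_0) simp
  ultimately show ?thesis
    using tendsto_cong by force
qed

lemma norm_trunc_ratio_le:
  assumes "norm z < 1" "K \<le> n"
  shows "norm (trunc_ratio z n K) \<le> exp (1 / (1 - norm q)) / exp (- (norm z / ((1 - norm z) * (1 - norm q))))"
proof -
  have "norm (z * q ^ (n - K)) \<le> norm z"
    using norm_q_less_1 by (simp add: norm_mult norm_power mult_left_le power_le_one)
  then have "exp (- (norm z / ((1 - norm z) * (1 - norm q)))) \<le> norm (qpoch (z * q ^ (n - K)) q K)"
    using exp_le_norm_qpoch norm_q_less_1 assms(1) by blast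
  moreover have "norm (qpoch (q ^ (n + 1 - K)) q K) \<le> exp (1 / (1 - norm q))"
    using norm_qpoch_le_exp norm_q_less_1 by (simp add: norm_power power_le_one)
  ultimately show ?thesis
    unfolding trunc_ratio_def norm_divide by (intro frac_le) auto
qed

lemma norm_series_term_lower_bound:
  assumes "1 \<le> m" "1 \<le> norm z" "qpoch_below m z \<noteq> 0"
  shows "exp (- (norm q / ((1 - norm q) * (1 - norm q)))) / (norm (qpoch_below m z) * exp (1 / (1 - norm q)) * 2 ^ m)
    \<le> norm (series_term m z k)"
proof -
  define r K where "r = norm q" and "K = Suc k"
  have z: "z \<noteq> 0" using assms(2) by auto
  have "norm q ^ m \<le> norm q"
    using assms(1) norm_q_less_1 power_decreasing[of 1 m "norm q"] by simp
  also have "norm q \<le> norm q * norm z"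
    using assms(2) by (simp add: mult_le_cancel_left1)
  finally have "norm (q ^ m / z) \<le> r"
    using z by (simp add: r_def norm_divide norm_power divide_le_eq)
  then have "exp (- (r / ((1 - r) * (1 - r)))) \<le> norm (qpoch (q ^ m / z) q K)"
    using exp_le_norm_qpoch norm_q_less_1 unfolding r_def by blast
  also have "\<dots> \<le> norm (homog_qpoch m z K)"
    unfolding qpoch_times_power_eq_homog_qpoch[OF z, symmetric] norm_mult norm_power
    using assms(2) by (simp add: mult_left_le_one_le mult_le_cancel_left1 one_le_power)
  finally have num: "exp (- (r / ((1 - r) * (1 - r)))) \<le> norm (homog_qpoch m z K)" .
  have "norm (qpoch q q K) \<le> exp (1 / (1 - r))"
    using norm_qpoch_le_exp norm_q_less_1 unfolding r_def by simp
  moreover have "norm q ^ K \<le> 1"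
    using norm_q_less_1 by (simp add: power_le_one)
  then have "norm (1 - q ^ K) \<le> 2"
    using norm_triangle_ineq4[of 1 "q ^ K"] by (simp add: norm_power)
  then have "norm (1 - q ^ K) ^ m \<le> 2 ^ m" by (rule power_mono) simp
  moreover have "0 < norm (qpoch_below m z) * norm (qpoch q q K) * norm (1 - q ^ K) ^ m"
    using assms(3) qpoch_q_nonzero[of K] one_minus_q_power_nonzero[of K] unfolding K_def by auto
  ultimately show ?thesis
    using num unfolding series_term_def K_def[symmetric] r_def[symmetric] norm_divide norm_mult norm_power
    by (intro frac_le mult_mono mult_left_mono) auto
qed

lemma norm_less_1_if_summable_series_term:
  assumes "1 \<le> m" "qpoch_below m z \<noteq> 0" "summable (series_term m z)"
  shows "norm z < 1"
proof (rule ccontr)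
  define c where "c = exp (- (norm q / ((1 - norm q) * (1 - norm q))))
      / (norm (qpoch_below m z) * exp (1 / (1 - norm q)) * 2 ^ m)"
  assume "\<not> norm z < 1"
  then have bound: "c \<le> norm (series_term m z k)" for k
    using norm_series_term_lower_bound assms(1,2) unfolding c_def by simp
  have "(\<lambda>k. norm (series_term m z k)) \<longlonglongrightarrow> 0"
    using summable_LIMSEQ_zero[OF assms(3)] by (rule tendsto_norm_zero)
  moreover have "0 < c"
    using assms(2) unfolding c_def by auto
  ultimately have "eventually (\<lambda>k. norm (series_term m z k) < c) sequentially"
    by (rule order_tendstoD)
  then obtain k where "norm (series_term m z k) < c"
    by (auto simp: eventually_sequentially)
  then show False using bound[of k] by simp
qed

lemma series_term_Suc:
  assumes "qpoch_below m z \<noteq> 0"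
  shows "series_term m z (Suc k) = series_term m z k * ((z - q ^ (m + Suc k)) * (1 - q ^ Suc k) ^ m / (1 - q ^ Suc (Suc k)) ^ Suc m)"
proof -
  have n: "1 - q ^ Suc k \<noteq> 0" "1 - q ^ Suc (Suc k) \<noteq> 0" "qpoch q q (Suc k) \<noteq> 0"
    using one_minus_q_power_nonzero[of "Suc k"] one_minus_q_power_nonzero[of "Suc (Suc k)"] qpoch_q_nonzero by auto
  have e1: "homog_qpoch m z (Suc (Suc k)) = homog_qpoch m z (Suc k) * (z - q ^ (m + Suc k))"
    unfolding homog_qpoch_def by simp
  have e2: "qpoch q q (Suc (Suc k)) = qpoch q q (Suc k) * (1 - q ^ Suc (Suc k))"
    by (simp add: qpoch_Suc)
  show ?thesis unfolding series_term_def e1 e2 using n assms by (simp add: field_simps)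
qed

lemma summable_norm_series_term:
  assumes "norm z < 1" "qpoch_below m z \<noteq> 0"
  shows "summable (\<lambda>k. norm (series_term m z k))"
proof -
  define R where "R k = (z - q ^ (m + Suc k)) * (1 - q ^ Suc k) ^ m / (1 - q ^ Suc (Suc k)) ^ Suc m" for k
  have "R = (\<lambda>k. (z - q ^ Suc m * q ^ k) * (1 - q * q ^ k) ^ m / (1 - q ^ 2 * q ^ k) ^ Suc m)"
    unfolding R_def by (intro ext) (simp add: power_add mult_ac numeral_2_eq_2)
  moreover have "\<dots> \<longlonglongrightarrow> (z - q ^ Suc m * 0) * (1 - q * 0) ^ m / (1 - q ^ 2 * 0) ^ Suc m"
    by (intro tendsto_intros q_power_tendsto_0) simp
  ultimately have "(\<lambda>k. norm (R k)) \<longlonglongrightarrow> norm z"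
    by (simp add: tendsto_norm)
  then have "eventually (\<lambda>k. norm (R k) < (1 + norm z) / 2) sequentially"
    by (rule order_tendstoD) (use assms(1) in simp)
  then obtain N where N: "\<And>n. n \<ge> N \<Longrightarrow> norm (R n) < (1 + norm z) / 2"
    by (auto simp: eventually_sequentially)
  show ?thesis
  proof (rule summable_ratio_test[of "(1 + norm z) / 2" N])
    show "(1 + norm z) / 2 < 1" using assms(1) by simp
    fix n assume "N \<le> n"
    have "norm (norm (series_term m z (Suc n))) = norm (series_term m z n) * norm (R n)"
      unfolding R_def by (simp only: series_term_Suc[OF assms(2)] norm_mult real_norm_def abs_mult abs_norm_cancel)
    also have "\<dots> \<le> norm (series_term m z n) * ((1 + norm z) / 2)"
      using N[OF \<open>N \<le> n\<close>] by (intro mult_left_mono) auto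
    finally show "norm (norm (series_term m z (Suc n))) \<le> (1 + norm z) / 2 * norm (norm (series_term m z n))"
      by (simp add: mult_ac)
  qed
qed

lemma trunc_series_term_tendsto:
  assumes "qpoch_regular z" "qpoch_below m z \<noteq> 0"
  shows "(\<lambda>n. trunc_series_term m z k n) \<longlonglongrightarrow> series_term m z k"
proof -
  have "(\<lambda>n. series_term m z k * trunc_ratio z n (Suc k)) \<longlonglongrightarrow> series_term m z k * 1"
    by (intro tendsto_intros trunc_ratio_tendsto_1)
  moreover have "eventually (\<lambda>n. series_term m z k * trunc_ratio z n (Suc k) = trunc_series_term m z k n) sequentially"
    using eventually_ge_at_top[of "Suc k"] by (rule eventually_mono) (simp add: trunc_series_term_eq[OF _ assms])
  ultimately show ?thesis
    using tendsto_cong by fastforce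
qed

lemma norm_trunc_series_term_le:
  assumes "qpoch_regular z" "qpoch_below m z \<noteq> 0" "norm z < 1"
  shows "norm (trunc_series_term m z k n)
    \<le> norm (series_term m z k) * (exp (1 / (1 - norm q)) / exp (- (norm z / ((1 - norm z) * (1 - norm q)))))"
proof (cases "Suc k \<le> n")
  case True
  then show ?thesis
    unfolding trunc_series_term_eq[OF True assms(1,2)] norm_mult
    using norm_trunc_ratio_le[OF assms(3) True] by (intro mult_left_mono) auto
qed (simp add: trunc_series_term_def)

text \<open>Tannery's theorem; the dominating series exists only for \<open>norm z < 1\<close>, through the uniform
  bound on \<open>trunc_ratio\<close>.\<close>
lemma closed_form_tendsto:
  assumes "qpoch_regular z" "qpoch_below m z \<noteq> 0" "norm z < 1"
  shows "closed_form m z \<longlonglongrightarrow> - suminf (series_term m z)"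
proof -
  define C where "C = exp (1 / (1 - norm q)) / exp (- (norm z / ((1 - norm z) * (1 - norm q))))"
  have limit: "(\<lambda>n. trunc_series_term m z k n) \<longlonglongrightarrow> series_term m z k" for k
    by (rule trunc_series_term_tendsto[OF assms(1,2)])
  have bound: "\<forall>\<^sub>F (k, n) in at_top \<times>\<^sub>F sequentially.
      norm (trunc_series_term m z k n) \<le> norm (series_term m z k) * C"
    using norm_trunc_series_term_le[OF assms] unfolding C_def by (intro always_eventually) auto
  have "summable (\<lambda>k. norm (series_term m z k) * C)"
    by (intro summable_mult2 summable_norm_series_term assms(2,3))
  then have "(\<lambda>n. \<Sum>k. trunc_series_term m z k n) \<longlonglongrightarrow> suminf (series_term m z)"
    using tannerys_theorem[OF limit bound] by simp
  then have "(\<lambda>n. - (\<Sum>k. trunc_series_term m z k n)) \<longlonglongrightarrow> - suminf (series_term m z)"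
    by (rule tendsto_minus)
  moreover have "closed_form m z = (\<lambda>n. - (\<Sum>k. trunc_series_term m z k n))"
    unfolding closed_form_def sum_trunc_series_term[symmetric] by (simp add: fun_eq_iff)
  ultimately show ?thesis by simp
qed

end

theorem corollary4p2:
  fixes q z :: complex and m :: nat
  assumes "m \<ge> 1"
    and "norm q < 1" and "q \<noteq> 0" and "z \<noteq> 0"
    and "qpoch (z * q powi (- int m)) q m \<noteq> 0"
    and "\<And>k i. k \<ge> 1 \<Longrightarrow> i \<in> {1..m} \<Longrightarrow> 1 - z * q powi (int k - int i) \<noteq> 0"
    and "summable (\<lambda>k. qpoch (q ^ m / z) q (Suc k) * z ^ Suc k /
           (qpoch (z * q powi (- int m)) q m * qpoch q q (Suc k) * (1 - q ^ Suc k) ^ m))"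
  shows "((\<lambda>k. \<Prod>i\<in>{1..m}. q ^ k i / ((1 - z * q powi (int (k i) - int i)) * (1 - q ^ k i)))
           has_sum
          (- (\<Sum>k. qpoch (q ^ m / z) q (Suc k) * z ^ Suc k /
           (qpoch (z * q powi (- int m)) q m * qpoch q q (Suc k) * (1 - q ^ Suc k) ^ m))))
         (chain_idx m)"
proof -
  interpret q_base q using assms(2,3) by unfold_locales
  have regular: "qpoch_regular z"
    unfolding qpoch_regular_def
  proof
    fix j
    show "1 - z * q ^ j \<noteq> 0" using assms(6)[of "Suc j" 1] assms(1) by simp
  qed
  have below: "qpoch_below m z \<noteq> 0" using assms(5) unfolding qpoch_below_def .
  have series: "(\<lambda>k. qpoch (q ^ m / z) q (Suc k) * z ^ Suc k /
      (qpoch (z * q powi (- int m)) q m * qpoch q q (Suc k) * (1 - q ^ Suc k) ^ m)) = series_term m z"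
    by (rule ext) (rule series_term_altdef[OF assms(4), symmetric])
  have "norm z < 1"
    using norm_less_1_if_summable_series_term[OF assms(1) below] assms(7) unfolding series by simp
  then have limit: "closed_form m z \<longlonglongrightarrow> - suminf (series_term m z)"
    by (rule closed_form_tendsto[OF regular below])
  have summable: "chain_term z m summable_on chain_idx m"
    by (rule chain_term_summable_on[OF assms(1)])
  have "(\<lambda>n. sum (chain_term z m) (bounded_chains m n)) \<longlonglongrightarrow> infsum (chain_term z m) (chain_idx m)"
    by (rule filterlim_compose[OF infsum_tendsto[OF summable] filterlim_bounded_chains[OF assms(1)]])
  moreover have "sum (chain_term z m) (bounded_chains m n) = closed_form m z n" for n
    using chain_sum_eq_closed_form[OF regular below] assms(1) unfolding chain_sum_def chain_term_def by simp
  ultimately have "infsum (chain_term z m) (chain_idx m) = - suminf (series_term m z)"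
    using limit LIMSEQ_unique by auto
  then have "(chain_term z m has_sum - suminf (series_term m z)) (chain_idx m)"
    using has_sum_infsum[OF summable] by simp
  then show ?thesis
    unfolding series chain_term_def chain_factor_def .
qed

end
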